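(* Let $u\le v$ in Bruhat order on $S_m$ and $1\le i\le m$. Then: (1) $w\mapsto\epsilon_i(w)$ is a poset isomorphism from the Bruhat interval $[u,v]$ onto $[\epsilon_i(u),\epsilon_i(v)]$; (2) $[\epsilon_i(u),\epsilon_{i+1}(v)]=[\epsilon_i(u),\epsilon_i(v)]\sqcup[\epsilon_{i+1}(u),\epsilon_{i+1}(v)]$, and for $w,w'\in[u,v]$ and $j,k\in\{i,i+1\}$ we have $\epsilon_j(w)\le\epsilon_k(w')$ if and only if $w\le w'$ and $j\le k$.
   Context: For $w\in S_m$ and $1\le i\le m+1$, $\epsilon_i(w)\in S_{m+1}$ is defined by $\epsilon_i(w)(j)=w(j)+1$ for $j<i$, $\epsilon_i(w)(i)=1$, $\epsilon_i(w)(j)=w(j-1)+1$ for $j>i$. Bruhat intervals $[a,b]=\{w: a\le w\le b\}$ in Bruhat order. *)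

theory Defs
  imports "HOL-Combinatorics.Permutations"
begin

text \<open>Permutations in S_m are functions nat \<Rightarrow> nat permuting {1..m} (identity elsewhere).\<close>

definition inv_count :: "nat \<Rightarrow> (nat \<Rightarrow> nat) \<Rightarrow> nat" where
  "inv_count m w = card {(a, b). 1 \<le> a \<and> a < b \<and> b \<le> m \<and> w b < w a}"

definition bruhat_step :: "nat \<Rightarrow> (nat \<Rightarrow> nat) \<Rightarrow> (nat \<Rightarrow> nat) \<Rightarrow> bool" where
  "bruhat_step m w w' \<longleftrightarrow>
     (\<exists>a b. 1 \<le> a \<and> a < b \<and> b \<le> m \<and> w' = w \<circ> Transposition.transpose a b
            \<and> inv_count m w < inv_count m w')"

definition bruhat_le :: "nat \<Rightarrow> (nat \<Rightarrow> nat) \<Rightarrow> (nat \<Rightarrow> nat) \<Rightarrow> bool" where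
  "bruhat_le m u v \<longleftrightarrow> u permutes {1..m} \<and> v permutes {1..m} \<and> (bruhat_step m)\<^sup>*\<^sup>* u v"

definition bruhat_interval :: "nat \<Rightarrow> (nat \<Rightarrow> nat) \<Rightarrow> (nat \<Rightarrow> nat) \<Rightarrow> (nat \<Rightarrow> nat) set" where
  "bruhat_interval m a b = {w. bruhat_le m a w \<and> bruhat_le m w b}"

definition eps :: "nat \<Rightarrow> nat \<Rightarrow> (nat \<Rightarrow> nat) \<Rightarrow> (nat \<Rightarrow> nat)" where
  "eps m i w = (\<lambda>j. if j = 0 \<or> m + 1 < j then j
                    else if j < i then w j + 1
                    else if j = i then 1
                    else w (j - 1) + 1)"

end

theory Submission
  imports Defs
begin

text \<open>A Bruhat step \<open>w < w \<circ> (a b)\<close> is exactly an ascent \<open>w a < w b\<close>.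
  In \<open>\<epsilon>\<^sub>j(w)\<close> the value 1 sits at position \<open>j\<close>, and along an ascent the value 1 can
  only move to the right. Ascents of \<open>\<epsilon>\<^sub>j(w)\<close> that keep 1 in place are the images of ascents
  of \<open>w\<close>, and the only ascent of \<open>\<epsilon>\<^sub>i(w)\<close> moving 1 to position \<open>i + 1\<close> is
  \<open>\<epsilon>\<^sub>i(w) < \<epsilon>\<^sub>i(w) \<circ> (i i+1) = \<epsilon>\<^sub>i\<^sub>+\<^sub>1(w)\<close>. Hence every chain between elements \<open>\<epsilon>\<^sub>j(\<cdot>)\<close>
  with \<open>j \<in> {i, i+1}\<close> projects to a chain in \<open>S\<^sub>m\<close>, and both parts follow.\<close>

definition inversions :: "nat \<Rightarrow> (nat \<Rightarrow> nat) \<Rightarrow> (nat \<times> nat) set" where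
  "inversions m w = {(a, b). 1 \<le> a \<and> a < b \<and> b \<le> m \<and> w b < w a}"

lemma inv_count_eq_card_inversions: "inv_count m w = card (inversions m w)"
  by (simp add: inv_count_def inversions_def)

lemma finite_inversions: "finite (inversions m w)"
  by (rule finite_subset[of _ "{1..m} \<times> {1..m}"]) (auto simp: inversions_def)

text \<open>Injects the inversions of \<open>x \<circ> (a b)\<close> into those of \<open>x\<close> when \<open>x b < x a\<close>,
  missing \<open>(a, b)\<close>.\<close>
definition transfer_inversion :: "nat \<Rightarrow> nat \<Rightarrow> nat \<times> nat \<Rightarrow> nat \<times> nat" where
  "transfer_inversion a b z = (case z of (p, q) \<Rightarrow>
     if p < a \<and> (q = a \<or> q = b) then (p, Transposition.transpose a b q)
     else if b < q \<and> (p = a \<or> p = b) then (Transposition.transpose a b p, q) else (p, q))"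

lemma transfer_inversion_involution:
  "a < b \<Longrightarrow> transfer_inversion a b (transfer_inversion a b z) = z"
  by (cases z) (auto simp: transfer_inversion_def transpose_def)

lemma inv_count_comp_transpose_less:
  assumes ab: "1 \<le> a" "a < b" "b \<le> m" and xb: "x b < x a"
  shows "inv_count m (x \<circ> Transposition.transpose a b) < inv_count m x"
proof -
  let ?y = "x \<circ> Transposition.transpose a b" and ?f = "transfer_inversion a b"
  have inj: "inj_on ?f (inversions m ?y)"
    by (metis transfer_inversion_involution[OF ab(2)] inj_onI)
  have sub: "?f ` inversions m ?y \<subseteq> inversions m x - {(a, b)}"
  proof
    fix z assume "z \<in> ?f ` inversions m ?y"
    then obtain p q where pq: "(p, q) \<in> inversions m ?y" and z: "z = ?f (p, q)" by auto
    have "z \<noteq> (a, b)"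
    proof
      assume "z = (a, b)"
      then have "(p, q) = (a, b)"
        using z transfer_inversion_involution[OF ab(2), of "(p, q)"]
        by (simp add: transfer_inversion_def)
      with pq xb show False by (simp add: inversions_def)
    qed
    moreover have "z \<in> inversions m x"
      using pq ab xb unfolding z transfer_inversion_def inversions_def transpose_def
      by (auto split: if_splits)
    ultimately show "z \<in> inversions m x - {(a, b)}" by simp
  qed
  have ab_in: "(a, b) \<in> inversions m x" using ab xb by (simp add: inversions_def)
  have "card (inversions m ?y) = card (?f ` inversions m ?y)" using inj by (simp add: card_image)
  also have "\<dots> \<le> card (inversions m x - {(a, b)})"
    by (rule card_mono) (use finite_inversions sub in auto)
  also have "\<dots> < card (inversions m x)"
    by (rule card_Diff1_less[OF finite_inversions ab_in])
  finally show ?thesis by (simp add: inv_count_eq_card_inversions)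
qed

definition bruhat_ascent :: "nat \<Rightarrow> (nat \<Rightarrow> nat) \<Rightarrow> (nat \<Rightarrow> nat) \<Rightarrow> bool" where
  "bruhat_ascent m w w' \<longleftrightarrow>
     (\<exists>a b. 1 \<le> a \<and> a < b \<and> b \<le> m \<and> w' = w \<circ> Transposition.transpose a b \<and> w a < w b)"

lemma bruhat_step_eq_ascent: "bruhat_step m = bruhat_ascent m"
proof (intro ext iffI)
  fix w w' assume "bruhat_step m w w'"
  then obtain a b where ab: "1 \<le> a" "a < b" "b \<le> m" "w' = w \<circ> Transposition.transpose a b"
    and lt: "inv_count m w < inv_count m w'" by (auto simp: bruhat_step_def)
  have "w a < w b"
  proof (rule ccontr)
    assume "\<not> w a < w b"
    then consider "w b < w a" | "w a = w b" by linarith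
    then show False
    proof cases
      case 1
      then show False using inv_count_comp_transpose_less[OF ab(1-3), of w] lt ab(4) by simp
    next
      case 2
      then have "w' = w" using ab(4) by (auto simp: fun_eq_iff transpose_def)
      then show False using lt by simp
    qed
  qed
  then show "bruhat_ascent m w w'" using ab by (auto simp: bruhat_ascent_def)
next
  fix w w' assume "bruhat_ascent m w w'"
  then obtain a b where ab: "1 \<le> a" "a < b" "b \<le> m" "w' = w \<circ> Transposition.transpose a b"
    and lt: "w a < w b" by (auto simp: bruhat_ascent_def)
  have "w = w' \<circ> Transposition.transpose a b" using ab(4) by (auto simp: fun_eq_iff)
  moreover have "w' b < w' a" using ab lt by simp
  ultimately have "inv_count m w < inv_count m w'"
    using inv_count_comp_transpose_less[OF ab(1-3), of w'] by simp
  then show "bruhat_step m w w'" using ab by (auto simp: bruhat_step_def)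
qed

lemma bruhat_le_iff_ascents:
  "bruhat_le m u v \<longleftrightarrow> u permutes {1..m} \<and> v permutes {1..m} \<and> (bruhat_ascent m)\<^sup>*\<^sup>* u v"
  by (simp add: bruhat_le_def bruhat_step_eq_ascent)

lemma bruhat_le_trans: "bruhat_le m a b \<Longrightarrow> bruhat_le m b c \<Longrightarrow> bruhat_le m a c"
  unfolding bruhat_le_def by (meson rtranclp_trans)

lemma bruhat_ascent_permutes:
  "bruhat_ascent m w w' \<Longrightarrow> w permutes {1..m} \<Longrightarrow> w' permutes {1..m}"
  unfolding bruhat_ascent_def by (auto intro!: permutes_compose permutes_swap_id)

lemma bruhat_ascents_permutes:
  "(bruhat_ascent m)\<^sup>*\<^sup>* w w' \<Longrightarrow> w permutes {1..m} \<Longrightarrow> w' permutes {1..m}"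
  by (induction rule: rtranclp_induct) (simp, metis bruhat_ascent_permutes)

lemma permutes_atLeast1_eq_0_iff: "(w :: nat \<Rightarrow> nat) permutes {1..m} \<Longrightarrow> w x = 0 \<longleftrightarrow> x = 0"
  by (metis atLeastAtMost_iff not_one_le_zero permutes_in_image permutes_not_in)

lemma permutes_atLeast1_in_range:
  "(w :: nat \<Rightarrow> nat) permutes {1..m} \<Longrightarrow> 1 \<le> p \<Longrightarrow> p \<le> m \<Longrightarrow> 1 \<le> w p \<and> w p \<le> m"
  using permutes_in_image[of w "{1..m}" p] by auto

lemma bruhat_ascents_one_moves_right:
  assumes "(bruhat_ascent n)\<^sup>*\<^sup>* x y" "x permutes {1..n}" "x d = 1"
  shows "\<exists>d' \<ge> d. y d' = 1"
  using assms(1)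
proof (induction rule: rtranclp_induct)
  case base
  then show ?case using assms by auto
next
  case (step y z)
  then obtain d'' where d'': "d'' \<ge> d" "y d'' = 1" by auto
  have yp: "y permutes {1..n}" using bruhat_ascents_permutes step(1) assms(2) by blast
  from step(2) obtain a b where ab: "1 \<le> a" "a < b" "b \<le> n" "z = y \<circ> Transposition.transpose a b"
    and lt: "y a < y b" by (auto simp: bruhat_ascent_def)
  have "y a \<noteq> 0" using permutes_atLeast1_eq_0_iff[OF yp] ab(1) by simp
  show ?case
  proof (cases "d'' = a")
    case True
    then show ?thesis using ab d'' by (intro exI[of _ b]) auto
  next
    case False
    then have "d'' \<noteq> b" using d'' lt \<open>y a \<noteq> 0\<close> by auto
    then show ?thesis using False ab d'' by (intro exI[of _ d'']) auto
  qed
qed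

text \<open>Position \<open>p\<close> of \<open>w\<close> becomes position \<open>skip_pos i p\<close> of \<open>\<epsilon>\<^sub>i(w)\<close>.\<close>
definition skip_pos :: "nat \<Rightarrow> nat \<Rightarrow> nat" where
  "skip_pos i p = (if p < i then p else p + 1)"

definition unskip_pos :: "nat \<Rightarrow> nat \<Rightarrow> nat" where
  "unskip_pos i p = (if p < i then p else p - 1)"

lemma eps_eq_one_iff:
  assumes "1 \<le> j" "j \<le> m + 1" "w permutes {1..m}"
  shows "eps m j w k = 1 \<longleftrightarrow> k = j"
  using assms permutes_atLeast1_eq_0_iff[OF assms(3)] by (auto simp: eps_def)

lemma eps_skip_pos: "1 \<le> a \<Longrightarrow> a \<le> m \<Longrightarrow> eps m i w (skip_pos i a) = w a + 1"
  by (auto simp: eps_def skip_pos_def)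

lemma eps_unskip_pos: "p \<in> {1..m+1} \<Longrightarrow> p \<noteq> j \<Longrightarrow> eps m j w p = w (unskip_pos j p) + 1"
  by (auto simp: eps_def unskip_pos_def)

lemma eps_permutes:
  assumes j: "1 \<le> j" "j \<le> m + 1" and w: "w permutes {1..m}"
  shows "eps m j w permutes {1..m+1}"
proof (rule inj_imp_permutes)
  show "inj_on (eps m j w) {1..m+1}"
  proof (rule inj_onI)
    fix p q assume pq: "p \<in> {1..m+1}" "q \<in> {1..m+1}" "eps m j w p = eps m j w q"
    show "p = q"
    proof (cases "p = j \<or> q = j")
      case True
      then show ?thesis using pq eps_eq_one_iff[OF j w] by metis
    next
      case False
      then have "w (unskip_pos j p) = w (unskip_pos j q)"
        using pq eps_unskip_pos[of p m j w] eps_unskip_pos[of q m j w] by simp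
      then have "unskip_pos j p = unskip_pos j q" using injD[OF permutes_inj[OF w]] by blast
      then show ?thesis using False pq by (auto simp: unskip_pos_def split: if_splits)
    qed
  qed
  show "eps m j w x \<in> {1..m+1}" if x: "x \<in> {1..m+1}" for x
    using x j permutes_atLeast1_in_range[OF w, of x] permutes_atLeast1_in_range[OF w, of "x - 1"]
    by (auto simp: eps_def)
  show "\<And>x. x \<notin> {1..m+1} \<Longrightarrow> eps m j w x = x" by (auto simp: eps_def)
qed auto

lemma eps_inj:
  assumes w: "w permutes {1..m}" and w': "w' permutes {1..m}" and i: "1 \<le> i"
    and eq: "eps m i w = eps m i w'"
  shows "w = w'"
proof
  fix p
  show "w p = w' p"
  proof (cases "p \<in> {1..m}")
    case False
    then show ?thesis using permutes_not_in[OF w] permutes_not_in[OF w'] by simp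
  next
    case True
    have "eps m i w (skip_pos i p) = eps m i w' (skip_pos i p)" using eq by simp
    then show ?thesis using True eps_skip_pos[of p m i] by simp
  qed
qed

lemma eps_neq:
  assumes "1 \<le> j" "j \<le> m + 1" "1 \<le> k" "k \<le> m + 1" "j \<noteq> k"
    and "w permutes {1..m}" "w' permutes {1..m}"
  shows "eps m j w \<noteq> eps m k w'"
  using assms eps_eq_one_iff[of j m w j] eps_eq_one_iff[of k m w' j] by auto

lemma eps_comp_transpose:
  assumes "1 \<le> a" "a < b" "b \<le> m" "1 \<le> i" "i \<le> m + 1"
  shows "eps m i (w \<circ> Transposition.transpose a b)
       = eps m i w \<circ> Transposition.transpose (skip_pos i a) (skip_pos i b)"
  using assms by (auto simp: fun_eq_iff eps_def transpose_def skip_pos_def)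

lemma eps_Suc_eq_comp_transpose:
  "1 \<le> i \<Longrightarrow> i \<le> m \<Longrightarrow> eps m (i + 1) w = eps m i w \<circ> Transposition.transpose i (i + 1)"
  by (auto simp: fun_eq_iff eps_def transpose_def)

lemma bruhat_ascent_eps:
  assumes "bruhat_ascent m w w'" "1 \<le> i" "i \<le> m + 1"
  shows "bruhat_ascent (m + 1) (eps m i w) (eps m i w')"
proof -
  from assms(1) obtain a b where ab: "1 \<le> a" "a < b" "b \<le> m"
    "w' = w \<circ> Transposition.transpose a b" and lt: "w a < w b"
    by (auto simp: bruhat_ascent_def)
  show ?thesis
    unfolding bruhat_ascent_def
    using ab lt eps_comp_transpose[OF ab(1-3) assms(2,3), of w]
      eps_skip_pos[of a m i w] eps_skip_pos[of b m i w]
    by (intro exI[of _ "skip_pos i a"] exI[of _ "skip_pos i b"]) (auto simp: skip_pos_def)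
qed

lemma bruhat_ascents_eps:
  assumes "(bruhat_ascent m)\<^sup>*\<^sup>* w w'" "1 \<le> i" "i \<le> m + 1"
  shows "(bruhat_ascent (m + 1))\<^sup>*\<^sup>* (eps m i w) (eps m i w')"
  using assms(1)
proof (induction rule: rtranclp_induct)
  case (step y z)
  then show ?case using bruhat_ascent_eps[OF step(2) assms(2,3)] by simp
qed simp

lemma bruhat_ascent_eps_Suc:
  assumes "1 \<le> i" "i \<le> m" "w permutes {1..m}"
  shows "bruhat_ascent (m + 1) (eps m i w) (eps m (i + 1) w)"
  unfolding bruhat_ascent_def
  using assms eps_Suc_eq_comp_transpose[OF assms(1,2), of w]
    permutes_atLeast1_eq_0_iff[OF assms(3), of i]
  by (intro exI[of _ i] exI[of _ "i + 1"]) (auto simp: eps_def)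

text \<open>Such an ascent cannot involve position \<open>i\<close>, so it transposes two skipped positions.\<close>
lemma bruhat_ascent_from_eps_fixing_one:
  assumes w: "w permutes {1..m}" and i: "1 \<le> i" "i \<le> m + 1"
    and asc: "bruhat_ascent (m + 1) (eps m i w) y" and yi: "y i = 1"
  shows "\<exists>w'. y = eps m i w' \<and> bruhat_ascent m w w'"
proof -
  from asc obtain a b where ab: "1 \<le> a" "a < b" "b \<le> m + 1"
    "y = eps m i w \<circ> Transposition.transpose a b" and lt: "eps m i w a < eps m i w b"
    by (auto simp: bruhat_ascent_def)
  have "a \<noteq> i" "b \<noteq> i"
    using yi ab eps_eq_one_iff[OF i w] by (auto simp: transpose_def split: if_splits)
  define a' b' where "a' = unskip_pos i a" and "b' = unskip_pos i b"
  have a'b': "1 \<le> a'" "a' < b'" "b' \<le> m"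
    using ab \<open>a \<noteq> i\<close> \<open>b \<noteq> i\<close> i unfolding a'_def b'_def unskip_pos_def by auto
  have skip: "skip_pos i a' = a" "skip_pos i b' = b"
    using \<open>a \<noteq> i\<close> \<open>b \<noteq> i\<close> i ab unfolding a'_def b'_def unskip_pos_def skip_pos_def by auto
  have "y = eps m i (w \<circ> Transposition.transpose a' b')"
    using eps_comp_transpose[OF a'b' i, of w] skip ab(4) by simp
  moreover have "w a' < w b'"
    using lt eps_skip_pos[of a' m i w] eps_skip_pos[of b' m i w] a'b' skip by simp
  then have "bruhat_ascent m w (w \<circ> Transposition.transpose a' b')"
    unfolding bruhat_ascent_def using a'b' by blast
  ultimately show ?thesis by blast
qed

lemma bruhat_ascent_from_eps_moving_one:
  assumes w: "w permutes {1..m}" and i: "1 \<le> i" "i \<le> m"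
    and asc: "bruhat_ascent (m + 1) (eps m i w) z" and z: "z (i + 1) = 1"
  shows "z = eps m (i + 1) w"
proof -
  from asc obtain a b where ab: "a < b" "z = eps m i w \<circ> Transposition.transpose a b"
    by (auto simp: bruhat_ascent_def)
  have "Transposition.transpose a b (i + 1) = i"
    using z ab(2) eps_eq_one_iff[of i m w] i w by simp
  then have "a = i" "b = i + 1" using ab(1) by (auto simp: transpose_def split: if_splits)
  then show ?thesis using ab(2) eps_Suc_eq_comp_transpose[OF i, of w] by simp
qed

lemma bruhat_ascents_from_eps:
  assumes "(bruhat_ascent (m + 1))\<^sup>*\<^sup>* x y" and i: "1 \<le> i" "i \<le> m"
    and "j \<in> {i, i + 1}" "x = eps m j w" "w permutes {1..m}"
    and "k \<in> {i, i + 1}" "y k = 1"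
  shows "\<exists>w'. y = eps m k w' \<and> (bruhat_ascent m)\<^sup>*\<^sup>* w w'"
  using assms(1,4-)
proof (induction arbitrary: j w rule: converse_rtranclp_induct)
  case base
  then have "k = j" using eps_eq_one_iff[of j m w k] i by auto
  then show ?case using base by auto
next
  case (step x z)
  have j: "1 \<le> j" "j \<le> m + 1" using step.prems(1) i by auto
  have xp: "x permutes {1..m+1}" using eps_permutes[OF j step.prems(3)] step.prems(2) by simp
  have zp: "z permutes {1..m+1}" using bruhat_ascent_permutes[OF step.hyps(1) xp] .
  have yp: "y permutes {1..m+1}" using bruhat_ascents_permutes[OF step.hyps(2) zp] .
  have "x j = 1" using step.prems(2) eps_eq_one_iff[OF j step.prems(3)] by simp
  then obtain d where d: "d \<ge> j" "z d = 1"
    using bruhat_ascents_one_moves_right[OF r_into_rtranclp[of "bruhat_ascent (m + 1)", OF step.hyps(1)] xp] by blast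
  obtain d' where d': "d' \<ge> d" "y d' = 1"
    using bruhat_ascents_one_moves_right[OF step.hyps(2) zp d(2)] by blast
  have "d' = k" using injD[OF permutes_inj[OF yp]] d'(2) step.prems(5) by simp
  then consider "d = j" | "j = i" "d = i + 1" using d d' step.prems(1,4) by fastforce
  then show ?case
  proof cases
    case 1
    then obtain w'' where w'': "z = eps m j w''" "bruhat_ascent m w w''"
      using bruhat_ascent_from_eps_fixing_one[OF step.prems(3) j] step.hyps(1) step.prems(2) d(2)
      by blast
    moreover have "w'' permutes {1..m}" using bruhat_ascent_permutes[OF w''(2) step.prems(3)] .
    ultimately obtain w' where "y = eps m k w'" "(bruhat_ascent m)\<^sup>*\<^sup>* w'' w'"
      using step.IH[OF step.prems(1)] step.prems(4,5) by blast
    then show ?thesis using w''(2) converse_rtranclp_into_rtranclp[of "bruhat_ascent m"] by blast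
  next
    case 2
    then have "z = eps m (i + 1) w"
      using bruhat_ascent_from_eps_moving_one[OF step.prems(3) i] step.hyps(1) step.prems(2) d(2)
      by simp
    then show ?thesis using step.IH[of "i + 1" w] step.prems(3-5) by simp
  qed
qed

lemma bruhat_le_eps_iff:
  assumes w: "w permutes {1..m}" and w': "w' permutes {1..m}" and i: "1 \<le> i" "i \<le> m"
    and jk: "j \<in> {i, i + 1}" "k \<in> {i, i + 1}"
  shows "bruhat_le (m + 1) (eps m j w) (eps m k w') \<longleftrightarrow> bruhat_le m w w' \<and> j \<le> k"
proof -
  have j: "1 \<le> j" "j \<le> m + 1" and k: "1 \<le> k" "k \<le> m + 1" using jk i by auto
  show ?thesis
  proof
    assume "bruhat_le (m + 1) (eps m j w) (eps m k w')"
    then have chain: "(bruhat_ascent (m + 1))\<^sup>*\<^sup>* (eps m j w) (eps m k w')"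
      by (simp add: bruhat_le_iff_ascents)
    obtain w'' where w'': "eps m k w' = eps m k w''" "(bruhat_ascent m)\<^sup>*\<^sup>* w w''"
      using bruhat_ascents_from_eps[OF chain i jk(1) refl w jk(2)] eps_eq_one_iff[OF k w'] by blast
    have "w' = w''" using eps_inj[OF w' bruhat_ascents_permutes[OF w''(2) w] k(1) w''(1)] .
    then have "bruhat_le m w w'" using w'' w w' by (simp add: bruhat_le_iff_ascents)
    moreover obtain d where "d \<ge> j" "eps m k w' d = 1"
      using bruhat_ascents_one_moves_right[OF chain eps_permutes[OF j w]] eps_eq_one_iff[OF j w]
      by blast
    then have "j \<le> k" using eps_eq_one_iff[OF k w'] by simp
    ultimately show "bruhat_le m w w' \<and> j \<le> k" by simp
  next
    assume le: "bruhat_le m w w' \<and> j \<le> k"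
    then have chain: "(bruhat_ascent (m + 1))\<^sup>*\<^sup>* (eps m j w) (eps m j w')"
      using bruhat_ascents_eps[OF _ j] by (simp add: bruhat_le_iff_ascents)
    moreover have "j = k \<or> (j = i \<and> k = i + 1)" using le jk by auto
    ultimately have "(bruhat_ascent (m + 1))\<^sup>*\<^sup>* (eps m j w) (eps m k w')"
      using bruhat_ascent_eps_Suc[OF i w'] by auto
    then show "bruhat_le (m + 1) (eps m j w) (eps m k w')"
      using eps_permutes[OF j w] eps_permutes[OF k w'] by (simp add: bruhat_le_iff_ascents)
  qed
qed

lemma mem_bruhat_interval_eps:
  assumes uv: "bruhat_le m u v" and i: "1 \<le> i" "i \<le> m"
    and jk: "j \<in> {i, i + 1}" "k \<in> {i, i + 1}"
    and x: "x \<in> bruhat_interval (m + 1) (eps m j u) (eps m k v)"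
  obtains l w where "l \<in> {i, i + 1}" "j \<le> l" "l \<le> k"
    "w \<in> bruhat_interval m u v" "x = eps m l w"
proof -
  have u: "u permutes {1..m}" and v: "v permutes {1..m}" using uv by (simp_all add: bruhat_le_def)
  have j: "1 \<le> j" "j \<le> m + 1" and k: "1 \<le> k" "k \<le> m + 1" using jk i by auto
  have c1: "(bruhat_ascent (m + 1))\<^sup>*\<^sup>* (eps m j u) x"
    and c2: "(bruhat_ascent (m + 1))\<^sup>*\<^sup>* x (eps m k v)" and xp: "x permutes {1..m+1}"
    using x by (auto simp: bruhat_interval_def bruhat_le_iff_ascents)
  obtain d where d: "d \<ge> j" "x d = 1"
    using bruhat_ascents_one_moves_right[OF c1 eps_permutes[OF j u]] eps_eq_one_iff[OF j u] by blast
  obtain d' where "d' \<ge> d" "eps m k v d' = 1"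
    using bruhat_ascents_one_moves_right[OF c2 xp d(2)] by blast
  then have "d' = k" using eps_eq_one_iff[OF k v] by simp
  with d \<open>d' \<ge> d\<close> have l: "j \<le> d" "d \<le> k" "d \<in> {i, i + 1}" using jk by auto
  obtain w where xw: "x = eps m d w" and "(bruhat_ascent m)\<^sup>*\<^sup>* u w"
    using bruhat_ascents_from_eps[OF c1 i jk(1) refl u l(3) d(2)] by blast
  then have w: "w permutes {1..m}" using bruhat_ascents_permutes u by blast
  have "bruhat_le m u w" using bruhat_le_eps_iff[OF u w i jk(1) l(3)] x xw
    by (simp add: bruhat_interval_def)
  moreover have "bruhat_le m w v" using bruhat_le_eps_iff[OF w v i l(3) jk(2)] x xw
    by (simp add: bruhat_interval_def)
  ultimately show thesis using that l xw by (simp add: bruhat_interval_def)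
qed

lemma bruhat_le_eps_interval_iff:
  assumes "bruhat_le m u v" "1 \<le> i" "i \<le> m" "j \<in> {i, i + 1}" "k \<in> {i, i + 1}"
    and "w \<in> bruhat_interval m u v" "w' \<in> bruhat_interval m u v"
  shows "bruhat_le (m + 1) (eps m j w) (eps m k w') \<longleftrightarrow> bruhat_le m w w' \<and> j \<le> k"
  using assms bruhat_le_eps_iff[of w m w' i j k] by (simp add: bruhat_interval_def bruhat_le_def)

lemma eps_image_bruhat_interval:
  assumes uv: "bruhat_le m u v" and i: "1 \<le> i" "i \<le> m"
  shows "eps m i ` bruhat_interval m u v = bruhat_interval (m + 1) (eps m i u) (eps m i v)"
proof
  have ii: "i \<in> {i, i + 1}" by simp
  have u: "u \<in> bruhat_interval m u v" and v: "v \<in> bruhat_interval m u v"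
    using uv by (auto simp: bruhat_interval_def bruhat_le_def)
  note le = bruhat_le_eps_interval_iff[OF uv i ii ii]
  show "eps m i ` bruhat_interval m u v \<subseteq> bruhat_interval (m + 1) (eps m i u) (eps m i v)"
  proof
    fix x assume "x \<in> eps m i ` bruhat_interval m u v"
    then obtain w where w: "w \<in> bruhat_interval m u v" "x = eps m i w" by blast
    then show "x \<in> bruhat_interval (m + 1) (eps m i u) (eps m i v)"
      using le[OF u w(1)] le[OF w(1) v] by (simp add: bruhat_interval_def)
  qed
  show "bruhat_interval (m + 1) (eps m i u) (eps m i v) \<subseteq> eps m i ` bruhat_interval m u v"
  proof
    fix x assume "x \<in> bruhat_interval (m + 1) (eps m i u) (eps m i v)"
    then obtain l w where "l \<in> {i, i + 1}" "i \<le> l" "l \<le> i" "w \<in> bruhat_interval m u v" "x = eps m l w"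
      using mem_bruhat_interval_eps[OF uv i ii ii] by blast
    then show "x \<in> eps m i ` bruhat_interval m u v" by simp
  qed
qed

lemma bruhat_interval_eps_Suc_eq_Un:
  assumes uv: "bruhat_le m u v" and i: "1 \<le> i" "i \<le> m"
  shows "bruhat_interval (m + 1) (eps m i u) (eps m (i + 1) v)
       = bruhat_interval (m + 1) (eps m i u) (eps m i v)
         \<union> bruhat_interval (m + 1) (eps m (i + 1) u) (eps m (i + 1) v)"
    (is "?I = ?L \<union> ?R")
proof
  have ii: "i \<in> {i, i + 1}" "i + 1 \<in> {i, i + 1}" by simp_all
  have u: "u \<in> bruhat_interval m u v" and v: "v \<in> bruhat_interval m u v"
    using uv by (auto simp: bruhat_interval_def bruhat_le_def)
  note le = bruhat_le_eps_interval_iff[OF uv i]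
  show "?I \<subseteq> ?L \<union> ?R"
  proof
    fix x assume "x \<in> ?I"
    then obtain l w where lw: "l \<in> {i, i + 1}" "w \<in> bruhat_interval m u v" "x = eps m l w"
      using mem_bruhat_interval_eps[OF uv i ii] by metis
    then have "x \<in> bruhat_interval (m + 1) (eps m l u) (eps m l v)"
      using le[OF lw(1) lw(1) u lw(2)] le[OF lw(1) lw(1) lw(2) v] by (simp add: bruhat_interval_def)
    then show "x \<in> ?L \<union> ?R" using lw(1) by auto
  qed
  have "bruhat_le (m + 1) (eps m i v) (eps m (i + 1) v)"
    and "bruhat_le (m + 1) (eps m i u) (eps m (i + 1) u)"
    using le[OF ii v v] le[OF ii u u] u v by (simp_all add: bruhat_interval_def)
  then show "?L \<union> ?R \<subseteq> ?I"
    using bruhat_le_trans by (auto simp: bruhat_interval_def)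
qed

lemma bruhat_interval_eps_disjoint:
  assumes uv: "bruhat_le m u v" and i: "1 \<le> i" "i \<le> m"
  shows "bruhat_interval (m + 1) (eps m i u) (eps m i v)
       \<inter> bruhat_interval (m + 1) (eps m (i + 1) u) (eps m (i + 1) v) = {}"
proof (rule equals0I)
  have ii: "i \<in> {i, i + 1}" "i + 1 \<in> {i, i + 1}" by simp_all
  fix x assume "x \<in> bruhat_interval (m + 1) (eps m i u) (eps m i v)
    \<inter> bruhat_interval (m + 1) (eps m (i + 1) u) (eps m (i + 1) v)"
  then obtain w w' where "w \<in> bruhat_interval m u v" "x = eps m i w"
    and "w' \<in> bruhat_interval m u v" "x = eps m (i + 1) w'"
    using mem_bruhat_interval_eps[OF uv i ii(1) ii(1)] mem_bruhat_interval_eps[OF uv i ii(2) ii(2)]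
    by (metis IntE le_antisym)
  then show False
    using i eps_neq[of i m "i + 1" w w'] by (auto simp: bruhat_interval_def bruhat_le_def)
qed

theorem mainTheorem13:
  fixes m i :: nat and u v :: "nat \<Rightarrow> nat"
  assumes uv: "bruhat_le m u v" and i1: "1 \<le> i" and im: "i \<le> m"
  shows "bij_betw (eps m i) (bruhat_interval m u v)
            (bruhat_interval (m + 1) (eps m i u) (eps m i v))
       \<and> (\<forall>w \<in> bruhat_interval m u v. \<forall>w' \<in> bruhat_interval m u v.
            bruhat_le (m + 1) (eps m i w) (eps m i w') \<longleftrightarrow> bruhat_le m w w')
       \<and> bruhat_interval (m + 1) (eps m i u) (eps m (i + 1) v)
           = bruhat_interval (m + 1) (eps m i u) (eps m i v)
             \<union> bruhat_interval (m + 1) (eps m (i + 1) u) (eps m (i + 1) v)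
       \<and> bruhat_interval (m + 1) (eps m i u) (eps m i v)
           \<inter> bruhat_interval (m + 1) (eps m (i + 1) u) (eps m (i + 1) v) = {}
       \<and> (\<forall>w \<in> bruhat_interval m u v. \<forall>w' \<in> bruhat_interval m u v.
            \<forall>j \<in> {i, i + 1}. \<forall>k \<in> {i, i + 1}.
              bruhat_le (m + 1) (eps m j w) (eps m k w') \<longleftrightarrow> bruhat_le m w w' \<and> j \<le> k)"
proof -
  have inj: "inj_on (eps m i) (bruhat_interval m u v)"
    using eps_inj[of _ m _ i] i1 by (auto simp: inj_on_def bruhat_interval_def bruhat_le_def)
  show ?thesis
    using inj eps_image_bruhat_interval[OF uv i1 im] bruhat_interval_eps_Suc_eq_Un[OF uv i1 im]
      bruhat_interval_eps_disjoint[OF uv i1 im] bruhat_le_eps_interval_iff[OF uv i1 im]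
    by (simp add: bij_betw_def)
qed

end
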